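(* Let $n\ge1$, $\bm{N}=(N_0,\ldots,N_{n-1},-\sum_{i<n}N_i)\in\mathbb{Z}^{n+1}$ with $\mathcal{F}_n(\bm{N})$ nonempty, $s_k=\sum_{j=0}^kN_j$, $\bm\alpha=(s_0,\ldots,s_{n-1})$, $\bm\beta=(s_{n-1},\ldots,s_0)$. Then \[ \operatorname{cap}_{\bm\alpha,\bm\beta}\Big(\prod_{\substack{0\le i,j\le n-1\\ i+j\le n}}\frac{1}{1-x_iy_j}\Big)=\sup_{\bm{f}\in\mathcal{F}_n(\bm{N})}\ \prod_{\substack{0\le i,j\le n-1\\ i+j\le n}}\frac{(a_{ij}+1)^{a_{ij}+1}}{a_{ij}^{a_{ij}}}=\sup_{\bm{f}\in\mathcal{F}_n(\bm{N})}e^{\mathcal{H}(\bm{f})}, \] where $(a_{ij})=A(\bm{f})$ is the matrix associated with $\bm{f}$ as in the context.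
   Context: $\mathcal{F}_n(\bm{N})$ is the set of $\bm{f}=(f_{ij})_{0\le i<j\le n}\in\mathbb{R}_{\ge0}^{\binom{n+1}{2}}$ with $\sum_{j>i} f_{ij}-\sum_{k<i} f_{ki}=N_i$ for every $i$. For $\bm{f}\in\mathcal{F}_n(\bm{N})$, the $n\times n$ matrix $A(\bm{f})=(a_{ij})_{0\le i,j\le n-1}$ is defined by $a_{ij}=f_{i,n-j}$ if $i+j\le n-1$, $a_{i,n-i}=\sum_{0\le k<i}(N_k-f_{k,i})$ for $1\le i\le n-1$, and $a_{ij}=0$ if $i+j>n$; it has row sums $\bm\alpha$ and column sums $\bm\beta$. Convention $0^0=1$. For a power series $p$ in variables $\bm{z}$ with nonnegative coefficients and $\bm\gamma\ge0$, $\operatorname{cap}_{\bm\gamma}(p)=\inf_{\bm{z}>0}p(\bm{z})/\bm{z}^{\bm\gamma}$; here the variables are $(\bm{x},\bm{y})=(x_0,\ldots,x_{n-1},y_0,\ldots,y_{n-1})$ and the exponent vector is $(\bm\alpha,\bm\beta)$. With $h(t)=(t+1)\log(t+1)-t\log t$, the flow entropy is $\mathcal{H}(\bm{f})=\sum_{0\le i<j\le n}h(f_{ij})+\sum_{0<j<n}h\big(\sum_{0\le i<j}(N_i-f_{ij})\big)$. *)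

theory Defs
  imports "HOL-Analysis.Analysis"
begin

definition Nfull :: "nat \<Rightarrow> (nat \<Rightarrow> int) \<Rightarrow> nat \<Rightarrow> int" where
  "Nfull n N i = (if i < n then N i else if i = n then - (\<Sum>k<n. N k) else 0)"

definition flows :: "nat \<Rightarrow> (nat \<Rightarrow> int) \<Rightarrow> (nat \<Rightarrow> nat \<Rightarrow> real) set" where
  "flows n N = {f. (\<forall>i j. (i < j \<and> j \<le> n \<longrightarrow> 0 \<le> f i j) \<and>
                         (\<not> (i < j \<and> j \<le> n) \<longrightarrow> f i j = 0)) \<and>
                   (\<forall>i\<le>n. (\<Sum>j\<in>{i<..n}. f i j) - (\<Sum>k<i. f k i) = of_int (Nfull n N i))}"

definition Amat :: "nat \<Rightarrow> (nat \<Rightarrow> int) \<Rightarrow> (nat \<Rightarrow> nat \<Rightarrow> real) \<Rightarrow> nat \<Rightarrow> nat \<Rightarrow> real" where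
  "Amat n N f i j =
     (if i + j \<le> n - 1 then f i (n - j)
      else if 1 \<le> i \<and> i \<le> n - 1 \<and> j = n - i then (\<Sum>k<i. of_int (N k) - f k i)
      else 0)"

definition Pidx :: "nat \<Rightarrow> (nat \<times> nat) set" where
  "Pidx n = {(i, j). i < n \<and> j < n \<and> i + j \<le> n}"

definition psi :: "real \<Rightarrow> real" where
  "psi t = (t + 1) powr (t + 1) / (if t = 0 then 1 else t powr t)"

definition hfun :: "real \<Rightarrow> real" where
  "hfun t = (t + 1) * ln (t + 1) - t * ln t"

definition Hent :: "nat \<Rightarrow> (nat \<Rightarrow> int) \<Rightarrow> (nat \<Rightarrow> nat \<Rightarrow> real) \<Rightarrow> real" where
  "Hent n N f = (\<Sum>(i, j)\<in>{(i, j). i < j \<and> j \<le> n}. hfun (f i j))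
              + (\<Sum>j\<in>{0<..<n}. hfun (\<Sum>i<j. of_int (N i) - f i j))"

text \<open>Capacity of a (nonnegative-coefficient) power series p in variables indexed by I,
  given as its value function (in [0,\<infinity>], \<infinity> where it diverges):
  cap_gamma(p) = inf_{z > 0} p(z) / z^gamma.\<close>
definition cap :: "'v set \<Rightarrow> ('v \<Rightarrow> real) \<Rightarrow> (('v \<Rightarrow> real) \<Rightarrow> ennreal) \<Rightarrow> ennreal" where
  "cap I \<gamma> p = (INF z\<in>{z. \<forall>v\<in>I. 0 < z v}. p z / ennreal (\<Prod>v\<in>I. z v powr \<gamma> v))"

text \<open>Variables (x_0..x_(n-1), y_0..y_(n-1)) as Inl i / Inr j.\<close>
definition vars :: "nat \<Rightarrow> (nat + nat) set" where
  "vars n = Inl ` {..<n} \<union> Inr ` {..<n}"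

text \<open>Value of prod_{(i,j) in Pidx} 1/(1 - x_i y_j) as a power series (expanded geometric series).\<close>
definition gen_series :: "nat \<Rightarrow> ((nat + nat) \<Rightarrow> real) \<Rightarrow> ennreal" where
  "gen_series n z = (\<Prod>(i, j)\<in>Pidx n. (\<Sum>k. ennreal ((z (Inl i) * z (Inr j)) ^ k)))"

definition gamma_ab :: "nat \<Rightarrow> (nat \<Rightarrow> int) \<Rightarrow> (nat + nat) \<Rightarrow> real" where
  "gamma_ab n N v = (case v of
       Inl i \<Rightarrow> of_int (\<Sum>k\<le>i. N k)
     | Inr j \<Rightarrow> of_int (\<Sum>k\<le>n - 1 - j. N k))"

end

theory Submission
  imports Defs "HOL-Real_Asymp.Real_Asymp"
begin

(*
  The matrix A(f) identifies the flows in F_n(N) with the nonnegative matrices supported on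
  {i + j <= n} whose row and column sums are alpha and beta (a transportation polytope), and
  turns the flow entropy into the matrix entropy sum h(a_ij).

  With x_i = exp q_i and y_j = exp q'_j the series is finite iff every x_i y_j < 1, and then the
  logarithm of p(x, y) / x^alpha y^beta is the convex function
  Phi(q) = sum phi(q_i + q'_j) - <gamma, q>, where phi w = -ln (1 - e^w); so the capacity is
  inf exp Phi. Since h and phi are convex conjugates, h(t) + t w <= phi(w), and summing over a
  matrix with margins gamma gives H(a) <= Phi(q). For the converse, minimise
  Phi(q) + eps |q|^2: at the minimiser the matrix t_ij = e^w / (1 - e^w), w = q_i + q'_j, has
  margins gamma - 2 eps q and satisfies Phi(q) <= H(t). As eps -> 0 also eps q -> 0, so a limit
  point of these matrices lies in the polytope and has entropy at least log cap.
*)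

section \<open>The entropy function and its conjugate\<close>

(* For w < 0, phi w = ln (\<Sum>k. exp (k * w)) is the logarithm of one geometric factor. *)
definition phi :: "real \<Rightarrow> real" where
  "phi w = - ln (1 - exp w)"

lemma phi_nonneg: "w < 0 \<Longrightarrow> 0 \<le> phi w"
  by (simp add: phi_def ln_le_zero_iff)

lemma exp_le_of_phi_le:
  assumes "w < 0" "phi w \<le> M"
  shows "exp w \<le> 1 - exp (- M)"
proof -
  have "- M \<le> ln (1 - exp w)" using assms(2) by (simp add: phi_def)
  then have "exp (- M) \<le> exp (ln (1 - exp w))" by simp
  also have "\<dots> = 1 - exp w" using assms(1) by simp
  finally show ?thesis by linarith
qed

lemma hfun_0 [simp]: "hfun 0 = 0"
  by (simp add: hfun_def)

lemma hfun_nonneg: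
  assumes "0 \<le> t"
  shows "0 \<le> hfun t"
proof (cases "t = 0")
  case False
  then have "t * ln t \<le> t * ln (t + 1)" using assms by (intro mult_left_mono) auto
  also have "\<dots> \<le> (t + 1) * ln (t + 1)" using assms by (intro mult_right_mono) auto
  finally show ?thesis by (simp add: hfun_def)
qed simp

(* Fenchel-Young: phi w = max (hfun t + t * w) over t \<ge> 0, attained at t = exp w / (1 - exp w). *)
lemma hfun_le_phi:
  assumes t: "0 \<le> t" and w: "w < 0"
  shows "hfun t \<le> phi w - t * w"
proof (cases "t = 0")
  case True
  then show ?thesis using phi_nonneg[OF w] by simp
next
  case False
  then have t: "0 < t" using t by simp
  define r where "r = exp w"
  have r: "0 < r" "r < 1" using w by (auto simp: r_def)
  have "t * ln ((t + 1) * r / t) \<le> t * ((t + 1) * r / t - 1)"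
    using t r by (intro mult_left_mono ln_le_minus_one) auto
  also have "\<dots> = (t + 1) * r - t" using t by (simp add: field_simps)
  finally have A: "t * (ln (t + 1) + ln r - ln t) \<le> (t + 1) * r - t"
    using t r by (simp add: ln_div ln_mult)
  have "ln ((t + 1) * (1 - r)) \<le> (t + 1) * (1 - r) - 1"
    using t r by (intro ln_le_minus_one) auto
  then have B: "ln (t + 1) + ln (1 - r) \<le> (t + 1) * (1 - r) - 1"
    using t r by (simp add: ln_mult)
  have "hfun t - (phi w - t * w) = t * (ln (t + 1) + ln r - ln t) + (ln (t + 1) + ln (1 - r))"
    by (simp add: hfun_def phi_def r_def algebra_simps)
  also have "\<dots> \<le> 0" using A B by (simp add: algebra_simps)
  finally show ?thesis by simp
qed

lemma hfun_eq_phi: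
  assumes w: "w < 0"
  shows "hfun (exp w / (1 - exp w)) = phi w - exp w / (1 - exp w) * w"
proof -
  define r where "r = exp w"
  have r: "0 < r" "r < 1" using w by (auto simp: r_def)
  define t where "t = r / (1 - r)"
  have "t + 1 = 1 / (1 - r)" using r by (simp add: t_def field_simps)
  then have l1: "ln (t + 1) = - ln (1 - r)" using r by (simp add: ln_div)
  have l2: "ln t = ln r - ln (1 - r)" using r by (simp add: t_def ln_div)
  have "hfun t = (t + 1) * (- ln (1 - r)) - t * (ln r - ln (1 - r))"
    by (simp add: hfun_def l1 l2)
  then have "hfun t = - ln (1 - r) - t * ln r" by (simp add: algebra_simps)
  then show ?thesis by (simp add: t_def r_def phi_def)
qed

lemma psi_eq_exp_hfun: "0 \<le> t \<Longrightarrow> psi t = exp (hfun t)"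
  by (cases "t = 0") (simp_all add: psi_def hfun_def powr_def exp_diff)

lemma continuous_on_hfun: "continuous_on {0..} hfun"
proof -
  have "((\<lambda>t::real. t * ln t) \<longlongrightarrow> x * ln x) (at x within {0..})" if "0 \<le> x" for x
  proof (cases "x = 0")
    case True
    then show ?thesis by (simp add: at_within_Ici_at_right) real_asymp
  next
    case False
    then have "isCont (\<lambda>t::real. t * ln t) x" using that by (intro continuous_intros) auto
    then show ?thesis using continuous_at_imp_continuous_at_within continuous_within by blast
  qed
  then have "continuous_on {0..} (\<lambda>t::real. t * ln t)"
    by (simp add: continuous_on_def)
  moreover have "continuous_on {0..} (\<lambda>t::real. (t + 1) * ln (t + 1))"
    by (intro continuous_intros) auto
  ultimately show ?thesis
    unfolding hfun_def[abs_def] by (intro continuous_on_diff)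
qed

section \<open>Matrices with prescribed margins and the capacity\<close>

(* A matrix a supported on E \<subseteq> I \<times> J has its row sums at Inl i and its column sums at Inr j. *)
definition incidence :: "'a + 'b \<Rightarrow> 'a \<times> 'b \<Rightarrow> real" where
  "incidence v e = (if v = Inl (fst e) then 1 else 0) + (if v = Inr (snd e) then 1 else 0)"

definition margin :: "('a \<times> 'b) set \<Rightarrow> ('a \<Rightarrow> 'b \<Rightarrow> real) \<Rightarrow> 'a + 'b \<Rightarrow> real" where
  "margin E a v = (\<Sum>(i, j)\<in>E. a i j * incidence v (i, j))"

lemma margin_Inl:
  assumes "finite E"
  shows "margin E a (Inl i) = (\<Sum>j\<in>{j. (i, j) \<in> E}. a i j)"
proof -
  have "margin E a (Inl i) = (\<Sum>e\<in>E. if fst e = i then a (fst e) (snd e) else 0)"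
    unfolding margin_def by (intro sum.cong refl) (auto simp: incidence_def)
  also have "\<dots> = (\<Sum>e\<in>{e\<in>E. fst e = i}. a (fst e) (snd e))"
    using assms by (rule sum.inter_filter[symmetric])
  also have "{e\<in>E. fst e = i} = Pair i ` {j. (i, j) \<in> E}" by force
  also have "(\<Sum>e\<in>Pair i ` {j. (i, j) \<in> E}. a (fst e) (snd e)) = (\<Sum>j\<in>{j. (i, j) \<in> E}. a i j)"
    by (subst sum.reindex) (auto simp: inj_on_def)
  finally show ?thesis .
qed

lemma margin_Inr:
  assumes "finite E"
  shows "margin E a (Inr j) = (\<Sum>i\<in>{i. (i, j) \<in> E}. a i j)"
proof -
  have "margin E a (Inr j) = (\<Sum>e\<in>E. if snd e = j then a (fst e) (snd e) else 0)"
    unfolding margin_def by (intro sum.cong refl) (auto simp: incidence_def)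
  also have "\<dots> = (\<Sum>e\<in>{e\<in>E. snd e = j}. a (fst e) (snd e))"
    using assms by (rule sum.inter_filter[symmetric])
  also have "{e\<in>E. snd e = j} = (\<lambda>i. (i, j)) ` {i. (i, j) \<in> E}" by force
  also have "(\<Sum>e\<in>(\<lambda>i. (i, j)) ` {i. (i, j) \<in> E}. a (fst e) (snd e)) = (\<Sum>i\<in>{i. (i, j) \<in> E}. a i j)"
    by (subst sum.reindex) (auto simp: inj_on_def)
  finally show ?thesis .
qed

definition transport_polytope ::
    "('a \<times> 'b) set \<Rightarrow> ('a + 'b) set \<Rightarrow> ('a + 'b \<Rightarrow> real) \<Rightarrow> ('a \<Rightarrow> 'b \<Rightarrow> real) set" where
  "transport_polytope E V \<gamma> = {a. (\<forall>(i, j)\<in>E. 0 \<le> a i j) \<and> (\<forall>v\<in>V. margin E a v = \<gamma> v)}"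

definition matrix_entropy :: "('a \<times> 'b) set \<Rightarrow> ('a \<Rightarrow> 'b \<Rightarrow> real) \<Rightarrow> real" where
  "matrix_entropy E a = (\<Sum>(i, j)\<in>E. hfun (a i j))"

lemma prod_psi_eq_exp_matrix_entropy:
  assumes "\<forall>(i, j)\<in>E. 0 \<le> a i j"
  shows "(\<Prod>(i, j)\<in>E. psi (a i j)) = exp (matrix_entropy E a)"
proof (cases "finite E")
  case True
  have "(\<Prod>(i, j)\<in>E. psi (a i j)) = (\<Prod>(i, j)\<in>E. exp (hfun (a i j)))"
    using assms by (intro prod.cong refl) (auto simp: psi_eq_exp_hfun)
  then show ?thesis using True by (simp add: matrix_entropy_def exp_sum case_prod_unfold)
qed (simp add: matrix_entropy_def)

definition dual_domain :: "('a \<times> 'b) set \<Rightarrow> ('a + 'b \<Rightarrow> real) set" where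
  "dual_domain E = {q. \<forall>(i, j)\<in>E. q (Inl i) + q (Inr j) < 0}"

lemma neg_Inl_in_dual_domain: "(\<lambda>v. case v of Inl _ \<Rightarrow> -1 | Inr _ \<Rightarrow> 0) \<in> dual_domain E"
  by (simp add: dual_domain_def)

definition dual_objective ::
    "('a \<times> 'b) set \<Rightarrow> ('a + 'b) set \<Rightarrow> ('a + 'b \<Rightarrow> real) \<Rightarrow> ('a + 'b \<Rightarrow> real) \<Rightarrow> real" where
  "dual_objective E V \<gamma> q = (\<Sum>(i, j)\<in>E. phi (q (Inl i) + q (Inr j))) - (\<Sum>v\<in>V. \<gamma> v * q v)"

definition bipartite_series :: "('a \<times> 'b) set \<Rightarrow> ('a + 'b \<Rightarrow> real) \<Rightarrow> ennreal" where
  "bipartite_series E z = (\<Prod>(i, j)\<in>E. \<Sum>k. ennreal ((z (Inl i) * z (Inr j)) ^ k))"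

locale bipartite_support =
  fixes E :: "('a \<times> 'b) set" and V :: "('a + 'b) set"
  assumes finite_E: "finite E" and finite_V: "finite V"
    and Inl_in_V: "(i, j) \<in> E \<Longrightarrow> Inl i \<in> V"
    and Inr_in_V: "(i, j) \<in> E \<Longrightarrow> Inr j \<in> V"
begin

lemma sum_mult_incidence:
  assumes "(i, j) \<in> E"
  shows "(\<Sum>v\<in>V. q v * incidence v (i, j)) = q (Inl i) + q (Inr j)"
proof -
  have "q v * incidence v (i, j) = (if v = Inl i then q v else 0) + (if v = Inr j then q v else 0)"
    for v by (auto simp: incidence_def)
  then have "(\<Sum>v\<in>V. q v * incidence v (i, j)) =
      (\<Sum>v\<in>V. if v = Inl i then q v else 0) + (\<Sum>v\<in>V. if v = Inr j then q v else 0)"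
    by (simp add: sum.distrib)
  also have "\<dots> = q (Inl i) + q (Inr j)"
    using assms finite_V Inl_in_V Inr_in_V by (simp add: sum.delta)
  finally show ?thesis .
qed

lemma sum_margin_mult:
  "(\<Sum>(i, j)\<in>E. a i j * (q (Inl i) + q (Inr j))) = (\<Sum>v\<in>V. margin E a v * q v)"
proof -
  have "(\<Sum>(i, j)\<in>E. a i j * (q (Inl i) + q (Inr j))) =
        (\<Sum>(i, j)\<in>E. \<Sum>v\<in>V. a i j * q v * incidence v (i, j))"
    by (intro sum.cong refl) (auto simp: sum_mult_incidence[symmetric] sum_distrib_left mult.assoc)
  also have "\<dots> = (\<Sum>v\<in>V. \<Sum>(i, j)\<in>E. a i j * q v * incidence v (i, j))"
    by (subst sum.swap) (simp add: case_prod_unfold)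
  also have "\<dots> = (\<Sum>v\<in>V. margin E a v * q v)"
    by (simp add: margin_def sum_distrib_left case_prod_unfold mult_ac)
  finally show ?thesis .
qed

lemma weak_duality:
  assumes "a \<in> transport_polytope E V \<gamma>" "q \<in> dual_domain E"
  shows "matrix_entropy E a \<le> dual_objective E V \<gamma> q"
proof -
  have "matrix_entropy E a \<le>
        (\<Sum>(i, j)\<in>E. phi (q (Inl i) + q (Inr j)) - a i j * (q (Inl i) + q (Inr j)))"
    unfolding matrix_entropy_def using assms
    by (intro sum_mono) (auto simp: transport_polytope_def dual_domain_def intro!: hfun_le_phi)
  also have "\<dots> = (\<Sum>(i, j)\<in>E. phi (q (Inl i) + q (Inr j))) - (\<Sum>v\<in>V. margin E a v * q v)"
    by (simp add: sum_subtractf case_prod_unfold sum_margin_mult[symmetric])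
  also have "\<dots> = dual_objective E V \<gamma> q"
    using assms(1) by (simp add: dual_objective_def transport_polytope_def)
  finally show ?thesis .
qed

lemma matrix_entropy_nonneg: "a \<in> transport_polytope E V \<gamma> \<Longrightarrow> 0 \<le> matrix_entropy E a"
  unfolding matrix_entropy_def transport_polytope_def by (auto intro!: sum_nonneg hfun_nonneg)

lemma dual_objective_nonneg:
  assumes "transport_polytope E V \<gamma> \<noteq> {}" "q \<in> dual_domain E"
  shows "0 \<le> dual_objective E V \<gamma> q"
proof -
  from assms(1) obtain a where a: "a \<in> transport_polytope E V \<gamma>" by auto
  show ?thesis
    using weak_duality[OF a assms(2)] matrix_entropy_nonneg[OF a] by linarith
qed

lemma ln_in_dual_domain:
  assumes lt: "\<forall>(i, j)\<in>E. z (Inl i) * z (Inr j) < 1" and pos: "\<forall>v\<in>V. 0 < z v"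
  shows "(\<lambda>v. ln (z v)) \<in> dual_domain E"
proof -
  have "ln (z (Inl i)) + ln (z (Inr j)) < 0" if "(i, j) \<in> E" for i j
  proof -
    have "0 < z (Inl i)" "0 < z (Inr j)" using pos that Inl_in_V Inr_in_V by auto
    then have "ln (z (Inl i)) + ln (z (Inr j)) = ln (z (Inl i) * z (Inr j))" by (simp add: ln_mult)
    also have "\<dots> < 0" using lt that \<open>0 < z (Inl i)\<close> \<open>0 < z (Inr j)\<close> by auto
    finally show ?thesis .
  qed
  then show ?thesis by (auto simp: dual_domain_def)
qed

lemma bipartite_series_divide:
  assumes pos: "\<forall>v\<in>V. 0 < z v" and lt: "\<forall>(i, j)\<in>E. z (Inl i) * z (Inr j) < 1"
  shows "bipartite_series E z / ennreal (\<Prod>v\<in>V. z v powr \<gamma> v)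
         = ennreal (exp (dual_objective E V \<gamma> (\<lambda>v. ln (z v))))"
proof -
  have pos2: "0 < z (Inl i)" "0 < z (Inr j)" if "(i, j) \<in> E" for i j
    using pos that Inl_in_V Inr_in_V by auto
  have geom: "(\<Sum>k. ennreal ((z (Inl i) * z (Inr j)) ^ k))
              = ennreal (exp (phi (ln (z (Inl i)) + ln (z (Inr j)))))" if "(i, j) \<in> E" for i j
  proof -
    have "z (Inl i) * z (Inr j) < 1" using lt that by auto
    moreover have "(\<Sum>k. ennreal ((z (Inl i) * z (Inr j)) ^ k)) = ennreal (1 / (1 - z (Inl i) * z (Inr j)))"
      using pos2[OF that] lt that by (intro suminf_ennreal_eq geometric_sums) auto
    ultimately show ?thesis
      using pos2[OF that] by (simp add: phi_def exp_minus exp_add inverse_eq_divide)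
  qed
  define S where "S = (\<Sum>(i, j)\<in>E. phi (ln (z (Inl i)) + ln (z (Inr j))))"
  define T where "T = (\<Sum>v\<in>V. \<gamma> v * ln (z v))"
  have "bipartite_series E z = (\<Prod>(i, j)\<in>E. ennreal (exp (phi (ln (z (Inl i)) + ln (z (Inr j))))))"
    unfolding bipartite_series_def by (rule prod.cong[OF refl]) (clarsimp simp: geom)
  also have "\<dots> = ennreal (\<Prod>(i, j)\<in>E. exp (phi (ln (z (Inl i)) + ln (z (Inr j)))))"
    by (subst prod_ennreal[symmetric]) (auto simp: case_prod_unfold)
  also have "\<dots> = ennreal (exp S)"
    by (simp add: S_def exp_sum finite_E case_prod_unfold)
  finally have "bipartite_series E z = ennreal (exp S)" .
  moreover have "(\<Prod>v\<in>V. z v powr \<gamma> v) = (\<Prod>v\<in>V. exp (\<gamma> v * ln (z v)))"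
    using pos by (intro prod.cong refl) (auto simp: powr_def mult.commute)
  then have "(\<Prod>v\<in>V. z v powr \<gamma> v) = exp T"
    by (simp add: T_def exp_sum finite_V)
  ultimately have "bipartite_series E z / ennreal (\<Prod>v\<in>V. z v powr \<gamma> v) = ennreal (exp S / exp T)"
    by (simp only:) (rule divide_ennreal; simp)
  then show ?thesis
    unfolding dual_objective_def S_def[symmetric] T_def[symmetric] exp_diff .
qed

lemma bipartite_series_eq_top:
  fixes z :: "'a + 'b \<Rightarrow> real"
  assumes "(i, j) \<in> E" "1 \<le> z (Inl i) * z (Inr j)"
  shows "bipartite_series E z = top"
proof -
  have "(\<Sum>k. ennreal (r ^ k)) \<noteq> 0" for r :: real
  proof -
    have "(\<Sum>k\<in>{0}. ennreal (r ^ k)) \<le> (\<Sum>k. ennreal (r ^ k))"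
      by (rule sum_le_suminf[OF summableI]) auto
    then show ?thesis by auto
  qed
  then have "\<forall>e\<in>E. (case e of (i, j) \<Rightarrow> \<Sum>k. ennreal ((z (Inl i) * z (Inr j)) ^ k)) \<noteq> 0"
    by (simp add: case_prod_unfold)
  moreover have "(\<Sum>k. ennreal ((z (Inl i) * z (Inr j)) ^ k)) = top"
    using assms(2)
    by (subst summable_iff_suminf_neq_top[symmetric]) (auto simp: summable_geometric_iff)
  then have "\<exists>e\<in>E. (case e of (i, j) \<Rightarrow> \<Sum>k. ennreal ((z (Inl i) * z (Inr j)) ^ k)) = top"
    using assms(1) by (intro bexI[of _ "(i, j)"]) simp_all
  ultimately show ?thesis
    unfolding bipartite_series_def ennreal_prod_eq_top using finite_E by blast
qed

lemma cap_eq_INF_dual_objective: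
  "cap V \<gamma> (bipartite_series E) = (INF q\<in>dual_domain E. ennreal (exp (dual_objective E V \<gamma> q)))"
proof (rule antisym)
  show "cap V \<gamma> (bipartite_series E) \<le> (INF q\<in>dual_domain E. ennreal (exp (dual_objective E V \<gamma> q)))"
  proof (rule INF_greatest)
    fix q assume q: "q \<in> dual_domain E"
    have lt: "\<forall>(i, j)\<in>E. exp (q (Inl i)) * exp (q (Inr j)) < 1"
      using q by (auto simp: dual_domain_def exp_add[symmetric])
    have "cap V \<gamma> (bipartite_series E)
          \<le> bipartite_series E (\<lambda>v. exp (q v)) / ennreal (\<Prod>v\<in>V. exp (q v) powr \<gamma> v)"
      unfolding cap_def by (intro INF_lower) auto
    also have "\<dots> = ennreal (exp (dual_objective E V \<gamma> q))"
      using bipartite_series_divide[of "\<lambda>v. exp (q v)"] lt by simp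
    finally show "cap V \<gamma> (bipartite_series E) \<le> ennreal (exp (dual_objective E V \<gamma> q))" .
  qed
  show "(INF q\<in>dual_domain E. ennreal (exp (dual_objective E V \<gamma> q))) \<le> cap V \<gamma> (bipartite_series E)"
    unfolding cap_def
  proof (rule INF_greatest)
    fix z :: "'a + 'b \<Rightarrow> real" assume "z \<in> {z. \<forall>v\<in>V. 0 < z v}"
    then have pos: "\<forall>v\<in>V. 0 < z v" by simp
    show "(INF q\<in>dual_domain E. ennreal (exp (dual_objective E V \<gamma> q)))
          \<le> bipartite_series E z / ennreal (\<Prod>v\<in>V. z v powr \<gamma> v)"
    proof (cases "\<forall>(i, j)\<in>E. z (Inl i) * z (Inr j) < 1")
      case True
      then have "(\<lambda>v. ln (z v)) \<in> dual_domain E" using pos by (rule ln_in_dual_domain)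
      then show ?thesis
        unfolding bipartite_series_divide[OF pos True] by (rule INF_lower)
    next
      case False
      then obtain i j where "(i, j) \<in> E" "1 \<le> z (Inl i) * z (Inr j)" by auto
      then show ?thesis by (simp add: bipartite_series_eq_top ennreal_top_divide)
    qed
  qed
qed

lemma exp_matrix_entropy_le_cap:
  "a \<in> transport_polytope E V \<gamma> \<Longrightarrow> ennreal (exp (matrix_entropy E a)) \<le> cap V \<gamma> (bipartite_series E)"
  unfolding cap_eq_INF_dual_objective
  by (rule INF_greatest, rule ennreal_leI) (simp add: weak_duality)

lemma cap_le_exp_dual_objective:
  "q \<in> dual_domain E \<Longrightarrow> cap V \<gamma> (bipartite_series E) \<le> ennreal (exp (dual_objective E V \<gamma> q))"
  unfolding cap_eq_INF_dual_objective by (rule INF_lower)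

end

section \<open>Strong duality\<close>

lemma ex_minimizing_sequence:
  fixes f :: "'a \<Rightarrow> real"
  assumes "x \<in> S" and "bdd_below (f ` S)"
  obtains Q where "\<And>k. Q k \<in> S" and "\<And>k. f (Q k) < (INF x\<in>S. f x) + inverse (real (Suc k))"
proof -
  have "\<exists>q\<in>S. f q < (INF x\<in>S. f x) + inverse (real (Suc k))" for k
    using cInf_lessD[of "f ` S" "(INF x\<in>S. f x) + inverse (real (Suc k))"] assms(1) by auto
  then show ?thesis using that by metis
qed

lemma finite_bounded_subseq_tendsto:
  fixes X :: "nat \<Rightarrow> 'a \<Rightarrow> real"
  assumes "finite I" and "\<And>k x. x \<in> I \<Longrightarrow> \<bar>X k x\<bar> \<le> B"
  shows "\<exists>r l. strict_mono r \<and> (\<forall>x\<in>I. (\<lambda>k. X (r k) x) \<longlonglongrightarrow> l x)"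
  using assms
proof (induction I rule: finite_induct)
  case empty
  show ?case using strict_mono_id by blast
next
  case (insert x0 I)
  then obtain r l where r: "strict_mono r" and l: "\<forall>x\<in>I. (\<lambda>k. X (r k) x) \<longlonglongrightarrow> l x"
    by auto
  have "bounded (range (\<lambda>k. X (r k) x0))"
    using insert.prems by (intro boundedI[of _ B]) auto
  then obtain l0 s where s: "strict_mono s" and l0: "((\<lambda>k. X (r k) x0) \<circ> s) \<longlonglongrightarrow> l0"
    using bounded_imp_convergent_subsequence by blast
  have "(\<lambda>k. X ((r \<circ> s) k) x) \<longlonglongrightarrow> (l(x0 := l0)) x" if "x \<in> insert x0 I" for x
  proof (cases "x = x0")
    case False
    then have "((\<lambda>k. X (r k) x) \<circ> s) \<longlonglongrightarrow> l x"
      using l s that by (intro LIMSEQ_subseq_LIMSEQ) auto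
    then show ?thesis using False by (simp add: comp_def)
  qed (use l0 in \<open>simp add: comp_def\<close>)
  moreover have "strict_mono (r \<circ> s)" using r s by (rule strict_mono_o)
  ultimately show ?case by blast
qed

(* The dual objective need not attain its infimum, e.g. when the polytope lies in a face of the
  orthant; the penalty makes it coercive. *)
definition regularized_dual ::
    "('a \<times> 'b) set \<Rightarrow> ('a + 'b) set \<Rightarrow> ('a + 'b \<Rightarrow> real) \<Rightarrow> real \<Rightarrow> ('a + 'b \<Rightarrow> real) \<Rightarrow> real" where
  "regularized_dual E V \<gamma> \<epsilon> q = dual_objective E V \<gamma> q + \<epsilon> * (\<Sum>v\<in>V. (q v)\<^sup>2)"

(* The maximiser in hfun_le_phi, cf. hfun_eq_phi. *)
definition dual_to_primal :: "('a + 'b \<Rightarrow> real) \<Rightarrow> 'a \<Rightarrow> 'b \<Rightarrow> real" where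
  "dual_to_primal q i j = exp (q (Inl i) + q (Inr j)) / (1 - exp (q (Inl i) + q (Inr j)))"

lemma DERIV_phi_affine:
  assumes "w < 0"
  shows "((\<lambda>t. phi (w + t * s)) has_real_derivative exp w / (1 - exp w) * s) (at 0)"
proof -
  have "1 - exp w \<noteq> 0" using assms by simp
  then have "((\<lambda>t. - ln (1 - exp (w + t * s))) has_real_derivative
               - ((0 - exp (w + 0 * s) * (0 + 1 * s)) / (1 - exp (w + 0 * s)))) (at 0)"
    using assms by (intro derivative_eq_intros refl) auto
  then show ?thesis by (simp add: phi_def)
qed

lemma fun_upd_add_edge:
  "(q(c := q c + t)) (Inl i) + (q(c := q c + t)) (Inr j) = q (Inl i) + q (Inr j) + t * incidence c (i, j)"
  by (auto simp: incidence_def)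

context bipartite_support
begin

lemma dual_to_primal_nonneg: "q \<in> dual_domain E \<Longrightarrow> (i, j) \<in> E \<Longrightarrow> 0 \<le> dual_to_primal q i j"
  unfolding dual_to_primal_def dual_domain_def by (auto intro!: divide_nonneg_pos)

lemma dual_objective_le_entropy_dual_to_primal:
  assumes q: "q \<in> dual_domain E" and "0 \<le> \<epsilon>"
    and margins: "\<And>v. v \<in> V \<Longrightarrow> margin E (dual_to_primal q) v = \<gamma> v - 2 * \<epsilon> * q v"
  shows "dual_objective E V \<gamma> q \<le> matrix_entropy E (dual_to_primal q)"
proof -
  have "matrix_entropy E (dual_to_primal q) = (\<Sum>(i, j)\<in>E. phi (q (Inl i) + q (Inr j))
          - dual_to_primal q i j * (q (Inl i) + q (Inr j)))"
    unfolding matrix_entropy_def dual_to_primal_def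
    using q by (intro sum.cong refl) (auto simp: dual_domain_def hfun_eq_phi)
  also have "\<dots> = (\<Sum>(i, j)\<in>E. phi (q (Inl i) + q (Inr j)))
                  - (\<Sum>(i, j)\<in>E. dual_to_primal q i j * (q (Inl i) + q (Inr j)))"
    by (simp add: sum_subtractf case_prod_unfold)
  also have "\<dots> = (\<Sum>(i, j)\<in>E. phi (q (Inl i) + q (Inr j)))
                  - (\<Sum>v\<in>V. (\<gamma> v - 2 * \<epsilon> * q v) * q v)"
    by (simp add: sum_margin_mult margins)
  also have "\<dots> = dual_objective E V \<gamma> q + 2 * \<epsilon> * (\<Sum>v\<in>V. (q v)\<^sup>2)"
    by (simp add: dual_objective_def algebra_simps power2_eq_square sum_subtractf sum_distrib_left)
  finally show ?thesis using assms(2) by (simp add: sum_nonneg)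
qed

lemma regularized_dual_sublevel:
  assumes "transport_polytope E V \<gamma> \<noteq> {}" "q \<in> dual_domain E" "0 < \<epsilon>"
    and le: "regularized_dual E V \<gamma> \<epsilon> q \<le> C"
  shows "dual_objective E V \<gamma> q \<le> C" and "v \<in> V \<Longrightarrow> \<bar>q v\<bar> \<le> sqrt (C / \<epsilon>)"
proof -
  have dual: "0 \<le> dual_objective E V \<gamma> q" using assms(1,2) by (rule dual_objective_nonneg)
  have sq: "0 \<le> \<epsilon> * (\<Sum>v\<in>V. (q v)\<^sup>2)" using assms(3) by (simp add: sum_nonneg)
  show "dual_objective E V \<gamma> q \<le> C" using le sq by (simp add: regularized_dual_def)
  assume "v \<in> V"
  then have "\<epsilon> * (q v)\<^sup>2 \<le> \<epsilon> * (\<Sum>v\<in>V. (q v)\<^sup>2)"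
    using assms(3) finite_V by (intro mult_left_mono member_le_sum) auto
  also have "\<dots> \<le> C" using le dual by (simp add: regularized_dual_def)
  finally have "\<bar>q v\<bar>\<^sup>2 \<le> C / \<epsilon>" using assms(3) by (simp add: field_simps)
  then show "\<bar>q v\<bar> \<le> sqrt (C / \<epsilon>)" by (rule real_le_rsqrt)
qed

lemma limit_in_dual_domain:
  assumes Q: "\<And>k. Q k \<in> dual_domain E" and dual: "\<And>k. dual_objective E V \<gamma> (Q k) \<le> C"
    and bound: "\<And>k v. v \<in> V \<Longrightarrow> \<bar>Q k v\<bar> \<le> B"
    and lim: "\<And>v. v \<in> V \<Longrightarrow> (\<lambda>k. Q k v) \<longlonglongrightarrow> l v"
  shows "l \<in> dual_domain E"
proof -
  define M where "M = C + (\<Sum>v\<in>V. \<bar>\<gamma> v\<bar> * B)"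
  have "l (Inl i) + l (Inr j) < 0" if ij: "(i, j) \<in> E" for i j
  proof -
    have edge_neg: "Q k (Inl i') + Q k (Inr j') < 0" if "(i', j') \<in> E" for k i' j'
      using Q that by (auto simp: dual_domain_def)
    have "phi (Q k (Inl i) + Q k (Inr j)) \<le> M" for k
    proof -
      have "(\<lambda>(i', j'). phi (Q k (Inl i') + Q k (Inr j'))) (i, j)
            \<le> (\<Sum>(i', j')\<in>E. phi (Q k (Inl i') + Q k (Inr j')))"
        by (rule member_le_sum[OF ij _ finite_E]) (auto intro: phi_nonneg edge_neg)
      then have "phi (Q k (Inl i) + Q k (Inr j)) \<le> (\<Sum>(i, j)\<in>E. phi (Q k (Inl i) + Q k (Inr j)))"
        by simp
      also have "\<dots> = dual_objective E V \<gamma> (Q k) + (\<Sum>v\<in>V. \<gamma> v * Q k v)"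
        by (simp add: dual_objective_def)
      also have "(\<Sum>v\<in>V. \<gamma> v * Q k v) \<le> (\<Sum>v\<in>V. \<bar>\<gamma> v\<bar> * B)"
        using bound by (intro sum_mono) (metis abs_ge_self abs_ge_zero abs_mult mult_left_mono order_trans)
      finally show ?thesis using dual[of k] by (simp add: M_def)
    qed
    then have "exp (Q k (Inl i) + Q k (Inr j)) \<le> 1 - exp (- M)" for k
      using edge_neg[OF ij] by (intro exp_le_of_phi_le)
    moreover have "(\<lambda>k. exp (Q k (Inl i) + Q k (Inr j))) \<longlonglongrightarrow> exp (l (Inl i) + l (Inr j))"
      using lim Inl_in_V[OF ij] Inr_in_V[OF ij] by (intro tendsto_intros)
    ultimately have "exp (l (Inl i) + l (Inr j)) \<le> 1 - exp (- M)"
      by (intro LIMSEQ_le_const2) auto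
    then have "exp (l (Inl i) + l (Inr j)) < 1" using exp_gt_zero[of "- M"] by linarith
    then show ?thesis by simp
  qed
  then show ?thesis by (auto simp: dual_domain_def)
qed

lemma regularized_dual_tendsto:
  assumes lim: "\<And>v. v \<in> V \<Longrightarrow> (\<lambda>k. Q k v) \<longlonglongrightarrow> l v" and l: "l \<in> dual_domain E"
  shows "(\<lambda>k. regularized_dual E V \<gamma> \<epsilon> (Q k)) \<longlonglongrightarrow> regularized_dual E V \<gamma> \<epsilon> l"
proof -
  have "(\<lambda>k. phi (Q k (Inl i) + Q k (Inr j))) \<longlonglongrightarrow> phi (l (Inl i) + l (Inr j))"
    if ij: "(i, j) \<in> E" for i j
  proof -
    have "1 - exp (l (Inl i) + l (Inr j)) \<noteq> 0" using l ij by (auto simp: dual_domain_def)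
    then show ?thesis
      unfolding phi_def using lim Inl_in_V[OF ij] Inr_in_V[OF ij] by (intro tendsto_intros) auto
  qed
  then show ?thesis
    unfolding regularized_dual_def dual_objective_def using lim
    by (intro tendsto_intros) auto
qed

lemma exists_regularized_dual_min:
  assumes T: "transport_polytope E V \<gamma> \<noteq> {}" and \<epsilon>: "0 < \<epsilon>"
  shows "\<exists>q\<in>dual_domain E. \<forall>q'\<in>dual_domain E. regularized_dual E V \<gamma> \<epsilon> q \<le> regularized_dual E V \<gamma> \<epsilon> q'"
proof -
  define R where "R = regularized_dual E V \<gamma> \<epsilon>"
  define m where "m = (INF q\<in>dual_domain E. R q)"
  have "0 \<le> R q" if "q \<in> dual_domain E" for q
    using dual_objective_nonneg[OF T that] \<epsilon> by (simp add: R_def regularized_dual_def sum_nonneg)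
  then have bdd: "bdd_below (R ` dual_domain E)" by (rule bdd_belowI2)
  obtain Q where Q: "\<And>k. Q k \<in> dual_domain E" and RQ: "\<And>k. R (Q k) < m + inverse (real (Suc k))"
    using ex_minimizing_sequence[OF neg_Inl_in_dual_domain bdd] unfolding m_def by blast
  have RQ1: "R (Q k) \<le> m + 1" for k
  proof -
    have "inverse (real (Suc k)) \<le> 1" by (simp add: inverse_le_1_iff)
    then show ?thesis using RQ[of k] by linarith
  qed
  have dual_le: "dual_objective E V \<gamma> (Q k) \<le> m + 1" for k
    using regularized_dual_sublevel(1)[OF T Q \<epsilon> RQ1[unfolded R_def]] .
  have bound: "\<bar>Q k v\<bar> \<le> sqrt ((m + 1) / \<epsilon>)" if "v \<in> V" for k v
    using regularized_dual_sublevel(2)[OF T Q \<epsilon> RQ1[unfolded R_def] that] .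
  obtain r l where r: "strict_mono r" and l: "\<forall>v\<in>V. (\<lambda>k. Q (r k) v) \<longlonglongrightarrow> l v"
    using finite_bounded_subseq_tendsto[OF finite_V, of Q, OF bound] by blast
  have lim: "(\<lambda>k. Q (r k) v) \<longlonglongrightarrow> l v" if "v \<in> V" for v
    using l that by blast
  have l_dom: "l \<in> dual_domain E"
    by (rule limit_in_dual_domain[of "\<lambda>k. Q (r k)", OF Q dual_le bound lim])
  have "(\<lambda>k. R (Q (r k))) \<longlonglongrightarrow> R l"
    unfolding R_def using l l_dom by (intro regularized_dual_tendsto) auto
  moreover have "((\<lambda>k. inverse (real (Suc k))) \<circ> r) \<longlonglongrightarrow> 0"
    using LIMSEQ_inverse_real_of_nat r by (rule LIMSEQ_subseq_LIMSEQ)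
  then have "(\<lambda>k. m + inverse (real (Suc (r k)))) \<longlonglongrightarrow> m"
    using tendsto_add[OF tendsto_const, of _ 0 sequentially m] by (simp add: comp_def)
  ultimately have "R l \<le> m"
    by (rule LIMSEQ_le) (use RQ less_imp_le in blast)
  also have "m \<le> R q'" if "q' \<in> dual_domain E" for q'
    unfolding m_def using bdd that by (rule cINF_lower)
  finally show ?thesis using l_dom unfolding R_def by blast
qed

lemma dual_domain_eventually_shift:
  assumes "q \<in> dual_domain E"
  shows "eventually (\<lambda>t. q(c := q c + t) \<in> dual_domain E) (at 0)"
proof -
  have "eventually (\<lambda>t. q (Inl i) + q (Inr j) + t * incidence c (i, j) < 0) (at 0)"
    if "(i, j) \<in> E" for i j
  proof -
    have "((\<lambda>t. q (Inl i) + q (Inr j) + t * incidence c (i, j))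
           \<longlongrightarrow> q (Inl i) + q (Inr j) + 0 * incidence c (i, j)) (at 0)"
      by (intro tendsto_intros)
    then show ?thesis
      using assms that by (intro order_tendstoD(2)) (auto simp: dual_domain_def)
  qed
  then have "eventually (\<lambda>t. \<forall>(i, j)\<in>E. q (Inl i) + q (Inr j) + t * incidence c (i, j) < 0) (at 0)"
    by (intro eventually_ball_finite finite_E) auto
  then show ?thesis
    by (rule eventually_mono) (simp only: dual_domain_def mem_Collect_eq fun_upd_add_edge)
qed

lemma DERIV_regularized_dual_shift:
  assumes q: "q \<in> dual_domain E" and c: "c \<in> V"
  shows "((\<lambda>t. regularized_dual E V \<gamma> \<epsilon> (q(c := q c + t))) has_real_derivative
           margin E (dual_to_primal q) c - \<gamma> c + 2 * \<epsilon> * q c) (at 0)"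
proof -
  define \<delta> :: "'a + 'b \<Rightarrow> real" where "\<delta> v = (if v = c then 1 else 0)" for v
  have shift: "(q(c := q c + t)) v = q v + t * \<delta> v" for t v by (simp add: \<delta>_def)
  have edges: "((\<lambda>t. case e of (i, j) \<Rightarrow> phi (q (Inl i) + q (Inr j) + t * incidence c (i, j)))
                 has_real_derivative (case e of (i, j) \<Rightarrow> dual_to_primal q i j * incidence c (i, j))) (at 0)"
    if "e \<in> E" for e
    using DERIV_phi_affine q that by (cases e) (auto simp: dual_domain_def dual_to_primal_def)
  have d1: "((\<lambda>t. \<Sum>(i, j)\<in>E. phi (q (Inl i) + q (Inr j) + t * incidence c (i, j)))
              has_real_derivative margin E (dual_to_primal q) c) (at 0)"
    unfolding margin_def by (rule DERIV_sum[OF edges])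
  have d2: "((\<lambda>t. \<Sum>v\<in>V. \<gamma> v * (q v + t * \<delta> v)) has_real_derivative (\<Sum>v\<in>V. \<gamma> v * \<delta> v)) (at 0)"
    by (intro DERIV_sum derivative_eq_intros) auto
  have d3: "((\<lambda>t. \<Sum>v\<in>V. (q v + t * \<delta> v)\<^sup>2) has_real_derivative (\<Sum>v\<in>V. 2 * (q v * \<delta> v))) (at 0)"
    by (intro DERIV_sum derivative_eq_intros) auto
  have "f v * \<delta> v = (if v = c then f v else 0)" for f :: "'a + 'b \<Rightarrow> real" and v
    by (simp add: \<delta>_def)
  then have "(\<Sum>v\<in>V. \<gamma> v * \<delta> v) = \<gamma> c" "(\<Sum>v\<in>V. 2 * (q v * \<delta> v)) = 2 * q c"
    using c finite_V by (simp_all add: sum.delta sum_distrib_left[symmetric])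
  then have d: "((\<lambda>t. (\<Sum>(i, j)\<in>E. phi (q (Inl i) + q (Inr j) + t * incidence c (i, j)))
                  - (\<Sum>v\<in>V. \<gamma> v * (q v + t * \<delta> v)) + \<epsilon> * (\<Sum>v\<in>V. (q v + t * \<delta> v)\<^sup>2))
              has_real_derivative margin E (dual_to_primal q) c - \<gamma> c + \<epsilon> * (2 * q c)) (at 0)"
    using DERIV_add[OF DERIV_diff[OF d1 d2] DERIV_cmult[OF d3]] by simp
  have "regularized_dual E V \<gamma> \<epsilon> (q(c := q c + t))
        = (\<Sum>(i, j)\<in>E. phi (q (Inl i) + q (Inr j) + t * incidence c (i, j)))
          - (\<Sum>v\<in>V. \<gamma> v * (q v + t * \<delta> v)) + \<epsilon> * (\<Sum>v\<in>V. (q v + t * \<delta> v)\<^sup>2)" for t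
    unfolding regularized_dual_def dual_objective_def fun_upd_add_edge unfolding shift ..
  then show ?thesis using d by (simp add: mult_ac)
qed

lemma margin_dual_to_primal_at_min:
  assumes q: "q \<in> dual_domain E" and c: "c \<in> V"
    and min: "\<forall>q'\<in>dual_domain E. regularized_dual E V \<gamma> \<epsilon> q \<le> regularized_dual E V \<gamma> \<epsilon> q'"
  shows "margin E (dual_to_primal q) c = \<gamma> c - 2 * \<epsilon> * q c"
proof -
  define D where "D = margin E (dual_to_primal q) c - \<gamma> c + 2 * \<epsilon> * q c"
  let ?g = "\<lambda>t. regularized_dual E V \<gamma> \<epsilon> (q(c := q c + t))"
  have "(?g has_derivative (\<lambda>h. D * h)) (at 0)"
    using DERIV_regularized_dual_shift[OF q c] by (simp add: D_def has_field_derivative_def)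
  moreover have "eventually (\<lambda>t. ?g 0 \<le> ?g t) (at 0)"
    using dual_domain_eventually_shift[OF q, of c] by (rule eventually_mono) (use min in simp)
  ultimately have "(\<lambda>h. D * h) = (\<lambda>h. 0)" by (rule has_derivative_local_min)
  then have "D = 0" by (metis mult.right_neutral)
  then show ?thesis by (simp add: D_def)
qed

lemma regularized_minimizers_scaled_tendsto_0:
  assumes T: "transport_polytope E V \<gamma> \<noteq> {}"
    and \<epsilon>: "\<And>k. 0 < \<epsilon> k" "\<And>k. \<epsilon> k \<le> 1" "\<epsilon> \<longlonglongrightarrow> 0"
    and Q: "\<And>k. Q k \<in> dual_domain E"
    and min: "\<And>k. \<forall>q'\<in>dual_domain E.
                regularized_dual E V \<gamma> (\<epsilon> k) (Q k) \<le> regularized_dual E V \<gamma> (\<epsilon> k) q'"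
    and v: "v \<in> V"
  shows "(\<lambda>k. \<epsilon> k * Q k v) \<longlonglongrightarrow> 0"
proof -
  define K where "K = regularized_dual E V \<gamma> 1 (\<lambda>v. case v of Inl _ \<Rightarrow> -1 | Inr _ \<Rightarrow> 0)"
  have "\<forall>k. norm (\<epsilon> k * Q k v) \<le> sqrt (\<epsilon> k * K)"
  proof
    fix k
    have "regularized_dual E V \<gamma> (\<epsilon> k) (Q k)
          \<le> regularized_dual E V \<gamma> (\<epsilon> k) (\<lambda>v. case v of Inl _ \<Rightarrow> -1 | Inr _ \<Rightarrow> 0)"
      using min[of k] neg_Inl_in_dual_domain by blast
    also have "\<dots> \<le> K"
      unfolding K_def regularized_dual_def using \<epsilon>(1,2)[of k]
      by (simp add: mult_left_le_one_le sum_nonneg)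
    finally have "\<bar>Q k v\<bar> \<le> sqrt (K / \<epsilon> k)"
      by (rule regularized_dual_sublevel(2)[OF T Q \<epsilon>(1) _ v])
    then have "\<bar>\<epsilon> k * Q k v\<bar> \<le> sqrt ((\<epsilon> k)\<^sup>2) * sqrt (K / \<epsilon> k)"
      using \<epsilon>(1)[of k] by (simp add: abs_mult)
    also have "\<dots> = sqrt ((\<epsilon> k)\<^sup>2 * (K / \<epsilon> k))" by (rule real_sqrt_mult[symmetric])
    also have "(\<epsilon> k)\<^sup>2 * (K / \<epsilon> k) = \<epsilon> k * K" using \<epsilon>(1)[of k] by (simp add: power2_eq_square)
    finally show "norm (\<epsilon> k * Q k v) \<le> sqrt (\<epsilon> k * K)" by simp
  qed
  moreover have "(\<lambda>k. sqrt (\<epsilon> k * K)) \<longlonglongrightarrow> sqrt (0 * K)"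
    by (intro tendsto_real_sqrt tendsto_mult \<epsilon>(3) tendsto_const)
  then have "(\<lambda>k. sqrt (\<epsilon> k * K)) \<longlonglongrightarrow> 0" by simp
  ultimately show ?thesis by (rule Lim_null_comparison[OF always_eventually])
qed

lemma approximate_maximizers:
  assumes T: "transport_polytope E V \<gamma> \<noteq> {}"
  obtains A where "\<And>k i j. (i, j) \<in> E \<Longrightarrow> 0 \<le> A k i j"
    and "\<And>v. v \<in> V \<Longrightarrow> (\<lambda>k. margin E (A k) v) \<longlonglongrightarrow> \<gamma> v"
    and "\<And>k. cap V \<gamma> (bipartite_series E) \<le> ennreal (exp (matrix_entropy E (A k)))"
proof -
  define \<epsilon> :: "nat \<Rightarrow> real" where "\<epsilon> k = inverse (real (Suc k))" for k
  have \<epsilon>: "0 < \<epsilon> k" "\<epsilon> k \<le> 1" for k by (auto simp: \<epsilon>_def inverse_le_1_iff)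
  have "\<forall>k. \<exists>q. q \<in> dual_domain E \<and> (\<forall>q'\<in>dual_domain E.
      regularized_dual E V \<gamma> (\<epsilon> k) q \<le> regularized_dual E V \<gamma> (\<epsilon> k) q')"
    using exists_regularized_dual_min[OF T \<epsilon>(1)] by blast
  from choice[OF this] obtain Q where "\<forall>k. Q k \<in> dual_domain E \<and> (\<forall>q'\<in>dual_domain E.
      regularized_dual E V \<gamma> (\<epsilon> k) (Q k) \<le> regularized_dual E V \<gamma> (\<epsilon> k) q')" ..
  then have Q: "\<And>k. Q k \<in> dual_domain E" and min: "\<And>k. \<forall>q'\<in>dual_domain E.
      regularized_dual E V \<gamma> (\<epsilon> k) (Q k) \<le> regularized_dual E V \<gamma> (\<epsilon> k) q'"
    by simp_all
  note margins = margin_dual_to_primal_at_min[OF Q _ min]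
  have "0 \<le> dual_to_primal (Q k) i j" if "(i, j) \<in> E" for k i j
    using Q that by (rule dual_to_primal_nonneg)
  moreover have "(\<lambda>k. margin E (dual_to_primal (Q k)) v) \<longlonglongrightarrow> \<gamma> v" if v: "v \<in> V" for v
  proof -
    have "(\<lambda>k. \<epsilon> k * Q k v) \<longlonglongrightarrow> 0"
      by (rule regularized_minimizers_scaled_tendsto_0[OF T \<epsilon> _ Q min v])
        (unfold \<epsilon>_def, rule LIMSEQ_inverse_real_of_nat)
    then have "(\<lambda>k. \<gamma> v - 2 * (\<epsilon> k * Q k v)) \<longlonglongrightarrow> \<gamma> v - 2 * 0"
      by (intro tendsto_intros)
    then show ?thesis by (simp add: margins[OF v] mult.assoc)
  qed
  moreover have "cap V \<gamma> (bipartite_series E) \<le> ennreal (exp (matrix_entropy E (dual_to_primal (Q k))))"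
    for k
  proof -
    have "dual_objective E V \<gamma> (Q k) \<le> matrix_entropy E (dual_to_primal (Q k))"
      by (rule dual_objective_le_entropy_dual_to_primal[OF Q less_imp_le[OF \<epsilon>(1)] margins])
    then have "ennreal (exp (dual_objective E V \<gamma> (Q k)))
               \<le> ennreal (exp (matrix_entropy E (dual_to_primal (Q k))))"
      by (intro ennreal_leI) simp
    with cap_le_exp_dual_objective[OF Q] show ?thesis by (rule order_trans)
  qed
  ultimately show ?thesis by (rule that)
qed

lemma entry_le_margin:
  assumes "\<And>i' j'. (i', j') \<in> E \<Longrightarrow> 0 \<le> a i' j'" and "(i, j) \<in> E"
  shows "a i j \<le> margin E a (Inl i)"
proof -
  have "(\<lambda>(i', j'). a i' j' * incidence (Inl i) (i', j')) (i, j)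
        \<le> (\<Sum>(i', j')\<in>E. a i' j' * incidence (Inl i) (i', j'))"
    by (rule member_le_sum[OF assms(2) _ finite_E]) (auto simp: incidence_def assms(1))
  then show ?thesis by (simp add: margin_def incidence_def)
qed

lemma entries_bounded_of_margins_convergent:
  assumes nonneg: "\<And>k i j. (i, j) \<in> E \<Longrightarrow> 0 \<le> A k i j"
    and margins: "\<And>v. v \<in> V \<Longrightarrow> (\<lambda>k. margin E (A k) v) \<longlonglongrightarrow> \<gamma> v"
  obtains B where "\<And>k e. e \<in> E \<Longrightarrow> \<bar>A k (fst e) (snd e)\<bar> \<le> B"
proof -
  have "(\<lambda>k. \<Sum>v\<in>V. \<bar>margin E (A k) v\<bar>) \<longlonglongrightarrow> (\<Sum>v\<in>V. \<bar>\<gamma> v\<bar>)"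
    by (rule tendsto_sum, rule tendsto_rabs, rule margins)
  then have "convergent (\<lambda>k. \<Sum>v\<in>V. \<bar>margin E (A k) v\<bar>)" by (rule convergentI)
  then obtain B where "\<forall>k. norm (\<Sum>v\<in>V. \<bar>margin E (A k) v\<bar>) \<le> B"
    using BseqE[OF convergent_imp_Bseq] by blast
  then have B: "\<And>k. \<bar>\<Sum>v\<in>V. \<bar>margin E (A k) v\<bar>\<bar> \<le> B" by simp
  have "\<bar>A k i j\<bar> \<le> B" if "(i, j) \<in> E" for k i j
  proof -
    have "A k i j \<le> margin E (A k) (Inl i)" using nonneg that by (intro entry_le_margin) auto
    also have "\<dots> \<le> \<bar>margin E (A k) (Inl i)\<bar>" by (rule abs_ge_self)
    also have "\<dots> \<le> (\<Sum>v\<in>V. \<bar>margin E (A k) v\<bar>)"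
      by (rule member_le_sum) (use Inl_in_V that finite_V in auto)
    finally show ?thesis using B[of k] nonneg[OF that, of k] by simp
  qed
  then show ?thesis using that by fastforce
qed

lemma limit_in_transport_polytope:
  assumes nonneg: "\<And>k i j. (i, j) \<in> E \<Longrightarrow> 0 \<le> A k i j"
    and margins: "\<And>v. v \<in> V \<Longrightarrow> (\<lambda>k. margin E (A k) v) \<longlonglongrightarrow> \<gamma> v"
    and r: "strict_mono r" and lim: "\<And>i j. (i, j) \<in> E \<Longrightarrow> (\<lambda>k. A (r k) i j) \<longlonglongrightarrow> a i j"
  shows "a \<in> transport_polytope E V \<gamma>"
proof -
  have "0 \<le> a i j" if "(i, j) \<in> E" for i j
    using lim[OF that] nonneg[OF that] by (intro LIMSEQ_le_const) auto
  moreover have "margin E a v = \<gamma> v" if "v \<in> V" for v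
  proof (rule LIMSEQ_unique)
    show "(\<lambda>k. margin E (A (r k)) v) \<longlonglongrightarrow> margin E a v"
      unfolding margin_def using lim by (intro tendsto_sum) (auto intro!: tendsto_intros)
    show "(\<lambda>k. margin E (A (r k)) v) \<longlonglongrightarrow> \<gamma> v"
      using LIMSEQ_subseq_LIMSEQ[OF margins[OF that] r] by (simp add: comp_def)
  qed
  ultimately show ?thesis by (auto simp: transport_polytope_def)
qed

lemma cap_le_exp_matrix_entropy:
  assumes T: "transport_polytope E V \<gamma> \<noteq> {}"
  shows "\<exists>a\<in>transport_polytope E V \<gamma>. cap V \<gamma> (bipartite_series E) \<le> ennreal (exp (matrix_entropy E a))"
proof -
  obtain A where nonneg: "\<And>k i j. (i, j) \<in> E \<Longrightarrow> 0 \<le> A k i j"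
    and margins: "\<And>v. v \<in> V \<Longrightarrow> (\<lambda>k. margin E (A k) v) \<longlonglongrightarrow> \<gamma> v"
    and cap: "\<And>k. cap V \<gamma> (bipartite_series E) \<le> ennreal (exp (matrix_entropy E (A k)))"
    using approximate_maximizers[OF T] by blast
  obtain B where bound: "\<And>k e. e \<in> E \<Longrightarrow> \<bar>A k (fst e) (snd e)\<bar> \<le> B"
    using entries_bounded_of_margins_convergent[OF nonneg margins] by blast
  obtain r L where r: "strict_mono r" and L: "\<forall>e\<in>E. (\<lambda>k. A (r k) (fst e) (snd e)) \<longlonglongrightarrow> L e"
    using finite_bounded_subseq_tendsto[OF finite_E, of "\<lambda>k e. A k (fst e) (snd e)", OF bound] by blast
  define a where "a i j = L (i, j)" for i j
  have lim: "(\<lambda>k. A (r k) i j) \<longlonglongrightarrow> a i j" if "(i, j) \<in> E" for i j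
    using L that by (force simp: a_def)
  have a: "a \<in> transport_polytope E V \<gamma>"
    using nonneg margins r lim by (rule limit_in_transport_polytope)
  have "(\<lambda>k. matrix_entropy E (A (r k))) \<longlonglongrightarrow> matrix_entropy E a"
    unfolding matrix_entropy_def using lim nonneg a
    by (intro tendsto_sum) (auto simp: transport_polytope_def
        intro!: continuous_on_tendsto_compose[OF continuous_on_hfun])
  then have "(\<lambda>k. ennreal (exp (matrix_entropy E (A (r k))))) \<longlonglongrightarrow> ennreal (exp (matrix_entropy E a))"
    by (intro tendsto_ennrealI tendsto_exp)
  then have "cap V \<gamma> (bipartite_series E) \<le> ennreal (exp (matrix_entropy E a))"
    by (rule LIMSEQ_le_const) (use cap in auto)
  then show ?thesis using a by blast
qed

theorem cap_eq_SUP_matrix_entropy: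
  assumes "transport_polytope E V \<gamma> \<noteq> {}"
  shows "cap V \<gamma> (bipartite_series E)
         = (SUP a\<in>transport_polytope E V \<gamma>. ennreal (exp (matrix_entropy E a)))"
proof (rule antisym)
  obtain a where "a \<in> transport_polytope E V \<gamma>"
    and "cap V \<gamma> (bipartite_series E) \<le> ennreal (exp (matrix_entropy E a))"
    using cap_le_exp_matrix_entropy[OF assms] by blast
  then show "cap V \<gamma> (bipartite_series E) \<le> (SUP a\<in>transport_polytope E V \<gamma>. ennreal (exp (matrix_entropy E a)))"
    by (blast intro: SUP_upper2)
qed (rule SUP_least, rule exp_matrix_entropy_le_cap)

end

section \<open>Flows as transportation matrices\<close>

lemma finite_Pidx [simp]: "finite (Pidx n)"
proof -
  have "Pidx n \<subseteq> {..<n} \<times> {..<n}" by (auto simp: Pidx_def)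
  then show ?thesis by (rule finite_subset) auto
qed

lemma bipartite_support_Pidx: "bipartite_support (Pidx n) (vars n)"
proof
  show "finite (Pidx n)" "finite (vars n)" by (simp_all add: vars_def)
qed (auto simp: Pidx_def vars_def)

lemma gen_series_eq: "gen_series n = bipartite_series (Pidx n)"
  by (simp add: fun_eq_iff gen_series_def bipartite_series_def)

lemma margin_Pidx_Inl:
  assumes "i < n"
  shows "margin (Pidx n) a (Inl i) = (\<Sum>m\<in>{i<..n}. a i (n - m)) + (if 1 \<le> i then a i (n - i) else 0)"
proof -
  have "{j. (i, j) \<in> Pidx n} = {j. i + j < n} \<union> (if 1 \<le> i then {n - i} else {})"
    using assms by (cases "1 \<le> i") (auto simp: Pidx_def)
  moreover have "finite {j. i + j < n}" by (rule finite_subset[of _ "{..<n}"]) auto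
  moreover have "(\<Sum>j\<in>{j. i + j < n}. a i j) = (\<Sum>m\<in>{i<..n}. a i (n - m))"
    by (rule sum.reindex_bij_witness[where i="\<lambda>m. n - m" and j="\<lambda>j. n - j"]) auto
  ultimately show ?thesis by (simp add: margin_Inl sum.union_disjoint)
qed

lemma margin_Pidx_Inr:
  assumes "j < n"
  shows "margin (Pidx n) a (Inr j) = (\<Sum>k<n - j. a k j) + (if 1 \<le> j then a (n - j) j else 0)"
proof -
  have "{i. (i, j) \<in> Pidx n} = {..<n - j} \<union> (if 1 \<le> j then {n - j} else {})"
    using assms by (auto simp: Pidx_def)
  then show ?thesis by (simp add: margin_Inr sum.union_disjoint)
qed

lemma flows_nonneg: "f \<in> flows n N \<Longrightarrow> 0 \<le> f i j"
  unfolding flows_def by (cases "i < j \<and> j \<le> n") auto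

lemma flows_zero: "f \<in> flows n N \<Longrightarrow> \<not> (i < j \<and> j \<le> n) \<Longrightarrow> f i j = 0"
  unfolding flows_def by auto

lemma flows_conservation:
  "f \<in> flows n N \<Longrightarrow> i \<le> n \<Longrightarrow> (\<Sum>j\<in>{i<..n}. f i j) - (\<Sum>k<i. f k i) = of_int (Nfull n N i)"
  unfolding flows_def by auto

lemma flows_inflow_le:
  assumes f: "f \<in> flows n N" and i: "1 \<le> i" "i \<le> n"
  shows "(\<Sum>k<i. f k i) \<le> (\<Sum>k<i. of_int (N k))"
proof -
  have out: "(\<Sum>m\<in>{k<..n}. f k m) = (\<Sum>m\<le>n. f k m)" for k
    by (rule sum.mono_neutral_left) (auto intro: flows_zero[OF f])
  have inn: "(\<Sum>l<k. f l k) = (\<Sum>l<i. f l k)" if "k < i" for k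
    by (rule sum.mono_neutral_left) (use that in \<open>auto intro: flows_zero[OF f]\<close>)
  have "(\<Sum>k<i. of_int (N k)) = (\<Sum>k<i. (\<Sum>m\<in>{k<..n}. f k m) - (\<Sum>l<k. f l k))"
    using flows_conservation[OF f] i by (intro sum.cong refl) (auto simp: Nfull_def)
  also have "\<dots> = (\<Sum>k<i. \<Sum>m\<le>n. f k m) - (\<Sum>k<i. \<Sum>l<i. f l k)"
    by (simp add: out inn sum_subtractf)
  also have "(\<Sum>k<i. \<Sum>l<i. f l k) = (\<Sum>k<i. \<Sum>m<i. f k m)"
    by (rule sum.swap)
  finally have eq: "(\<Sum>k<i. of_int (N k)) = (\<Sum>k<i. \<Sum>m\<le>n. f k m) - (\<Sum>k<i. \<Sum>m<i. f k m)" .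
  have "(\<Sum>m<i. f k m) + f k i \<le> (\<Sum>m\<le>n. f k m)" for k
  proof -
    have "(\<Sum>m<i. f k m) + f k i = (\<Sum>m\<in>insert i {..<i}. f k m)" by simp
    also have "\<dots> \<le> (\<Sum>m\<le>n. f k m)"
      by (rule sum_mono2) (use i in \<open>auto intro: flows_nonneg[OF f]\<close>)
    finally show ?thesis .
  qed
  then have "(\<Sum>k<i. \<Sum>m<i. f k m) + (\<Sum>k<i. f k i) \<le> (\<Sum>k<i. \<Sum>m\<le>n. f k m)"
    by (simp add: sum.distrib[symmetric] sum_mono)
  then show ?thesis using eq by linarith
qed

lemma gamma_ab_Inl: "gamma_ab n N (Inl i) = (\<Sum>k<i. of_int (N k)) + of_int (N i)"
  by (simp add: gamma_ab_def lessThan_Suc_atMost[symmetric])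

lemma gamma_ab_Inr: "j < n \<Longrightarrow> gamma_ab n N (Inr j) = (\<Sum>k<n - j. of_int (N k))"
  by (simp add: gamma_ab_def lessThan_Suc_atMost[symmetric] Suc_diff_Suc)

lemma Amat_upper: "i + j < n \<Longrightarrow> Amat n N f i j = f i (n - j)"
  by (simp add: Amat_def)

lemma Amat_antidiagonal: "1 \<le> i \<Longrightarrow> i < n \<Longrightarrow> Amat n N f i (n - i) = (\<Sum>k<i. of_int (N k) - f k i)"
  by (simp add: Amat_def, arith)

lemma Amat_nonneg:
  assumes f: "f \<in> flows n N"
  shows "0 \<le> Amat n N f i j"
proof -
  consider "i + j \<le> n - 1" | "\<not> i + j \<le> n - 1" "1 \<le> i" "i \<le> n - 1" "j = n - i"
    | "Amat n N f i j = 0"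
    unfolding Amat_def by metis
  then show ?thesis
  proof cases
    case 2
    then have "(\<Sum>k<i. f k i) \<le> (\<Sum>k<i. of_int (N k))" using flows_inflow_le[OF f] by auto
    then show ?thesis using 2 by (simp add: Amat_def sum_subtractf)
  qed (simp_all add: Amat_def flows_nonneg[OF f])
qed

lemma margin_Amat:
  assumes f: "f \<in> flows n N" and v: "v \<in> vars n"
  shows "margin (Pidx n) (Amat n N f) v = gamma_ab n N v"
proof (cases v)
  case (Inl i)
  then have i: "i < n" using v by (auto simp: vars_def)
  have "(\<Sum>m\<in>{i<..n}. Amat n N f i (n - m)) = (\<Sum>m\<in>{i<..n}. f i m)"
    by (intro sum.cong refl) (auto simp: Amat_upper)
  moreover have "(\<Sum>m\<in>{i<..n}. f i m) - (\<Sum>k<i. f k i) = of_int (N i)"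
    using flows_conservation[OF f, of i] i by (simp add: Nfull_def)
  ultimately show ?thesis
    using i by (cases "i = 0") (auto simp: Inl margin_Pidx_Inl Amat_antidiagonal gamma_ab_Inl sum_subtractf)
next
  case (Inr j)
  then have j: "j < n" using v by (auto simp: vars_def)
  have "(\<Sum>k<n - j. Amat n N f k j) = (\<Sum>k<n - j. f k (n - j))"
    by (intro sum.cong refl) (auto simp: Amat_upper)
  moreover have "(\<Sum>k<n. f k n) = (\<Sum>k<n. of_int (N k))"
    using flows_conservation[OF f, of n] by (simp add: Nfull_def)
  moreover have "Amat n N f (n - j) j = (\<Sum>k<n - j. of_int (N k) - f k (n - j))" if "1 \<le> j"
    using Amat_antidiagonal[of "n - j" n N f] that j by simp
  ultimately show ?thesis
    using j by (cases "j = 0") (auto simp: Inr margin_Pidx_Inr gamma_ab_Inr sum_subtractf)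
qed

lemma Amat_in_transport_polytope:
  "f \<in> flows n N \<Longrightarrow> Amat n N f \<in> transport_polytope (Pidx n) (vars n) (gamma_ab n N)"
  by (simp add: transport_polytope_def Amat_nonneg margin_Amat)

lemma Hent_eq_matrix_entropy_Amat:
  assumes "1 \<le> n"
  shows "Hent n N f = matrix_entropy (Pidx n) (Amat n N f)"
proof -
  define A1 where "A1 = {(i, j). i + j < n}"
  define A2 where "A2 = {(i, j). i < n \<and> j < n \<and> i + j = n}"
  have "Pidx n = A1 \<union> A2" "A1 \<inter> A2 = {}" using assms by (auto simp: Pidx_def A1_def A2_def)
  moreover have "finite A1" "finite A2"
    by (rule finite_subset[of _ "{..<n} \<times> {..<n}"]; auto simp: A1_def A2_def)+
  moreover have "(\<Sum>(i, j)\<in>A1. hfun (Amat n N f i j)) = (\<Sum>(i, j)\<in>{(i, j). i < j \<and> j \<le> n}. hfun (f i j))"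
    by (rule sum.reindex_bij_witness[where i="\<lambda>(i, m). (i, n - m)" and j="\<lambda>(i, j). (i, n - j)"])
       (auto simp: A1_def Amat_upper)
  moreover have "(\<Sum>(i, j)\<in>A2. hfun (Amat n N f i j)) = (\<Sum>j\<in>{0<..<n}. hfun (\<Sum>i<j. of_int (N i) - f i j))"
    by (rule sum.reindex_bij_witness[where i="\<lambda>i. (i, n - i)" and j="\<lambda>(i, j). i"])
       (auto simp: A2_def Amat_def)
  ultimately show ?thesis by (simp add: Hent_def matrix_entropy_def sum.union_disjoint)
qed

(* Inverse of Amat on Pidx: the anti-diagonal entries of a matrix in the polytope are slacks. *)
definition flow_of_matrix :: "nat \<Rightarrow> (nat \<Rightarrow> nat \<Rightarrow> real) \<Rightarrow> nat \<Rightarrow> nat \<Rightarrow> real" where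
  "flow_of_matrix n a i m = (if i < m \<and> m \<le> n then a i (n - m) else 0)"

lemma transport_polytope_Pidx_row:
  assumes "a \<in> transport_polytope (Pidx n) (vars n) (gamma_ab n N)" "i < n"
  shows "(\<Sum>m\<in>{i<..n}. a i (n - m)) + (if 1 \<le> i then a i (n - i) else 0)
         = (\<Sum>k<i. of_int (N k)) + of_int (N i)"
  using assms margin_Pidx_Inl[of i n a]
  by (simp add: transport_polytope_def vars_def gamma_ab_Inl)

lemma transport_polytope_Pidx_column:
  assumes "a \<in> transport_polytope (Pidx n) (vars n) (gamma_ab n N)" "1 \<le> i" "i \<le> n"
  shows "(\<Sum>k<i. a k (n - i)) + (if i < n then a i (n - i) else 0) = (\<Sum>k<i. of_int (N k))"
proof -
  have "n - i < n" "n - (n - i) = i" "1 \<le> n - i \<longleftrightarrow> i < n" using assms(2,3) by auto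
  then show ?thesis
    using assms(1) margin_Pidx_Inr[of "n - i" n a] gamma_ab_Inr[of "n - i" n N]
    by (auto simp: transport_polytope_def vars_def)
qed

lemma flow_of_matrix_in_flows:
  assumes a: "a \<in> transport_polytope (Pidx n) (vars n) (gamma_ab n N)" and n: "1 \<le> n"
  shows "flow_of_matrix n a \<in> flows n N"
  unfolding flows_def
proof (intro CollectI conjI allI impI)
  fix i j
  show "\<not> (i < j \<and> j \<le> n) \<Longrightarrow> flow_of_matrix n a i j = 0" by (auto simp: flow_of_matrix_def)
  show "i < j \<and> j \<le> n \<Longrightarrow> 0 \<le> flow_of_matrix n a i j"
    using a by (auto simp: flow_of_matrix_def transport_polytope_def Pidx_def)
next
  fix i assume i: "i \<le> n"
  have out: "(\<Sum>m\<in>{i<..n}. flow_of_matrix n a i m) = (\<Sum>m\<in>{i<..n}. a i (n - m))"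
    by (intro sum.cong refl) (auto simp: flow_of_matrix_def)
  have inn: "(\<Sum>k<i. flow_of_matrix n a k i) = (\<Sum>k<i. a k (n - i))"
    using i by (intro sum.cong refl) (auto simp: flow_of_matrix_def)
  consider "i = 0" | "0 < i" "i < n" | "i = n" using i n by linarith
  then show "(\<Sum>m\<in>{i<..n}. flow_of_matrix n a i m) - (\<Sum>k<i. flow_of_matrix n a k i)
             = of_int (Nfull n N i)"
  proof cases
    case 1
    then show ?thesis using out transport_polytope_Pidx_row[OF a, of 0] n by (simp add: Nfull_def)
  next
    case 2
    then show ?thesis
      using transport_polytope_Pidx_row[OF a, of i] transport_polytope_Pidx_column[OF a, of i]
      by (simp add: out inn Nfull_def)
  next
    case 3
    then show ?thesis using inn transport_polytope_Pidx_column[OF a, of n] n by (simp add: Nfull_def)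
  qed
qed

lemma Amat_flow_of_matrix:
  assumes a: "a \<in> transport_polytope (Pidx n) (vars n) (gamma_ab n N)" and ij: "(i, j) \<in> Pidx n"
  shows "Amat n N (flow_of_matrix n a) i j = a i j"
proof (cases "i + j < n")
  case True
  then show ?thesis by (simp add: Amat_upper flow_of_matrix_def)
next
  case False
  then have j: "j = n - i" "1 \<le> i" "i < n" using ij by (auto simp: Pidx_def)
  have "Amat n N (flow_of_matrix n a) i j = (\<Sum>k<i. of_int (N k)) - (\<Sum>k<i. a k (n - i))"
    using j by (simp add: Amat_antidiagonal flow_of_matrix_def sum_subtractf)
  also have "\<dots> = a i j" using transport_polytope_Pidx_column[OF a j(2)] j by simp
  finally show ?thesis .
qed

lemma SUP_flows_eq_SUP_transport_polytope:
  assumes "1 \<le> n"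
  shows "(SUP f\<in>flows n N. ennreal (exp (matrix_entropy (Pidx n) (Amat n N f))))
         = (SUP a\<in>transport_polytope (Pidx n) (vars n) (gamma_ab n N). ennreal (exp (matrix_entropy (Pidx n) a)))"
proof (rule antisym)
  show "(SUP f\<in>flows n N. ennreal (exp (matrix_entropy (Pidx n) (Amat n N f))))
        \<le> (SUP a\<in>transport_polytope (Pidx n) (vars n) (gamma_ab n N). ennreal (exp (matrix_entropy (Pidx n) a)))"
    by (rule SUP_least, rule SUP_upper) (rule Amat_in_transport_polytope)
next
  have "ennreal (exp (matrix_entropy (Pidx n) a)) \<le> (SUP f\<in>flows n N. ennreal (exp (matrix_entropy (Pidx n) (Amat n N f))))"
    if a: "a \<in> transport_polytope (Pidx n) (vars n) (gamma_ab n N)" for a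
  proof (rule SUP_upper2)
    show "flow_of_matrix n a \<in> flows n N" using flow_of_matrix_in_flows[OF a assms] .
    show "ennreal (exp (matrix_entropy (Pidx n) a))
          \<le> ennreal (exp (matrix_entropy (Pidx n) (Amat n N (flow_of_matrix n a))))"
      using Amat_flow_of_matrix[OF a] by (simp add: matrix_entropy_def case_prod_unfold)
  qed
  then show "(SUP a\<in>transport_polytope (Pidx n) (vars n) (gamma_ab n N). ennreal (exp (matrix_entropy (Pidx n) a)))
        \<le> (SUP f\<in>flows n N. ennreal (exp (matrix_entropy (Pidx n) (Amat n N f))))"
    by (rule SUP_least)
qed

theorem proposition3p1:
  fixes n :: nat and N :: "nat \<Rightarrow> int"
  assumes "1 \<le> n"
    and "flows n N \<noteq> {}"
  shows "cap (vars n) (gamma_ab n N) (gen_series n)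
           = (SUP f\<in>flows n N. ennreal (\<Prod>(i, j)\<in>Pidx n. psi (Amat n N f i j)))
       \<and> (SUP f\<in>flows n N. ennreal (\<Prod>(i, j)\<in>Pidx n. psi (Amat n N f i j)))
           = (SUP f\<in>flows n N. ennreal (exp (Hent n N f)))"
proof -
  interpret bipartite_support "Pidx n" "vars n" by (rule bipartite_support_Pidx)
  have psi: "(\<Prod>(i, j)\<in>Pidx n. psi (Amat n N f i j)) = exp (matrix_entropy (Pidx n) (Amat n N f))"
    if "f \<in> flows n N" for f
    using Amat_nonneg[OF that] by (intro prod_psi_eq_exp_matrix_entropy) auto
  have "transport_polytope (Pidx n) (vars n) (gamma_ab n N) \<noteq> {}"
    using assms(2) Amat_in_transport_polytope by blast
  then have "cap (vars n) (gamma_ab n N) (gen_series n)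
             = (SUP f\<in>flows n N. ennreal (exp (matrix_entropy (Pidx n) (Amat n N f))))"
    unfolding gen_series_eq SUP_flows_eq_SUP_transport_polytope[OF assms(1)]
    by (rule cap_eq_SUP_matrix_entropy)
  moreover have "(SUP f\<in>flows n N. ennreal (exp (matrix_entropy (Pidx n) (Amat n N f))))
                 = (SUP f\<in>flows n N. ennreal (\<Prod>(i, j)\<in>Pidx n. psi (Amat n N f i j)))"
    by (rule SUP_cong) (simp_all add: psi)
  moreover have "(SUP f\<in>flows n N. ennreal (exp (matrix_entropy (Pidx n) (Amat n N f))))
                 = (SUP f\<in>flows n N. ennreal (exp (Hent n N f)))"
    by (simp add: Hent_eq_matrix_entropy_Amat[OF assms(1)])
  ultimately show ?thesis by simp
qed

end
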